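(* Let $a>0$, $T>0$, $\alpha\in(0,1)$, let $n>1$ be an integer, and let $s_1,\dots,s_n$ and $w_1,\dots,w_n$ be the nodes and weights of the $n$-point Gauss–Jacobi quadrature with weight function $s^{\alpha-1}$ on $[0,a]$. Then for every $t$ with $0<t<T$, $$\left|\int_0^a e^{-ts}s^{\alpha-1}\,ds-\sum_{k=1}^n w_k e^{-s_k t}\right|<\frac{4\sqrt{\pi}\,a^{\alpha}}{e^2}\,\frac{(2n-1)n^{3/2}}{2n+\alpha}\left[\frac{a e n T}{2(2n-1)^2}\right]^{2n}.$$
   Context: The $n$-point Gauss–Jacobi quadrature with weight $s^{\alpha-1}$ on $[0,a]$ is the rule $\int_0^a \varphi(s)s^{\alpha-1}\,ds\approx \sum_{k=1}^n w_k\varphi(s_k)$ which is exact for all polynomials $\varphi$ of degree at most $2n-1$. *)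

theory Defs
  imports "HOL-Analysis.Analysis" "HOL-Computational_Algebra.Polynomial"
begin

definition gauss_jacobi_rule ::
  "real \<Rightarrow> real \<Rightarrow> nat \<Rightarrow> (nat \<Rightarrow> real) \<Rightarrow> (nat \<Rightarrow> real) \<Rightarrow> bool" where
  "gauss_jacobi_rule a \<alpha> n s w \<longleftrightarrow>
     (\<forall>p :: real poly. degree p \<le> 2 * n - 1 \<longrightarrow>
        ((\<lambda>x. poly p x * x powr (\<alpha> - 1)) has_integral
           (\<Sum>k = 1..n. w k * poly p (s k))) {0..a})"

end

theory Submission
  imports Defs
begin

text \<open>For a polynomial P, the remainder of P modulo the squared node polynomial \<omega>^2 has degree
  below 2n and is integrated exactly, so the quadrature error of P is the weighted integral of
  (P div \<omega>^2) \<omega>^2; by the generalised Rolle theorem, (P div \<omega>^2)(x) is a value of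
  P^(2n) / (2n)!. Applied to the Taylor polynomials of exp(-t x), whose 2n-th derivatives are
  again Taylor polynomials times t^(2n), this gives in the limit
  |error| \<le> t^(2n) / (2n)! \<integral> \<omega>^2 x^(\<alpha>-1). Orthogonality of \<omega> to lower degrees makes \<omega>^2
  minimal among squares of monic polynomials of degree n; comparing with x times a shifted
  Chebyshev polynomial bounds the integral by 4 (a/4)^(2n-2) a^(\<alpha>+2) / (\<alpha>+2). The stated
  constant then follows from (2n)! \<ge> e (2n/e)^(2n) and (1 + 1/m)^(m+1) \<ge> e for m = 2n - 1.\<close>

section \<open>Roots of derivatives\<close>

lemma pderiv_root_between:
  fixes p :: "real poly"
  assumes "x < y" and "poly p x = poly p y"
  obtains z where "x < z" and "z < y" and "poly (pderiv p) z = 0"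
proof -
  have "continuous_on {x..y} (poly p)"
    by (intro continuous_intros)
  moreover have "poly p differentiable at u" for u
    using poly_DERIV real_differentiable_def by blast
  ultimately have "\<exists>z. x < z \<and> z < y \<and> DERIV (poly p) z :> 0"
    using Rolle[OF assms] by blast
  then show ?thesis
    using that poly_DERIV DERIV_unique by metis
qed

lemma pderiv_roots_interlace:
  fixes p :: "real poly"
  assumes "finite S" and "\<And>x. x \<in> S \<Longrightarrow> poly p x = 0"
  shows "\<exists>X. finite X \<and> card S \<le> card X + 1 \<and> X \<inter> S = {} \<and>
           (\<forall>x\<in>X. poly (pderiv p) x = 0 \<and> (\<exists>y\<in>S. \<exists>z\<in>S. y < x \<and> x < z))"
  using assms
proof (induction S rule: finite_linorder_max_induct)
  case empty
  then show ?case by auto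
next
  case (insert b S)
  then obtain X where X: "finite X" "card S \<le> card X + 1" "X \<inter> S = {}"
    and X_roots: "\<forall>x\<in>X. poly (pderiv p) x = 0 \<and> (\<exists>y\<in>S. \<exists>z\<in>S. y < x \<and> x < z)"
    by auto
  show ?case
  proof (cases "S = {}")
    case True
    then show ?thesis by (intro exI[of _ "{}"]) auto
  next
    case False
    define m where "m = Max S"
    have m: "m \<in> S" "m < b" "\<And>y. y \<in> S \<Longrightarrow> y \<le> m"
      using insert False by (auto simp: m_def)
    obtain z where z: "m < z" "z < b" "poly (pderiv p) z = 0"
      using pderiv_root_between[of m b p] m insert.prems by auto
    have X_below: "x < m" if "x \<in> X" for x
      using X_roots that m(3) by fastforce
    have "z \<notin> X" "b \<notin> X"
      using X_below z m(2) by force+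
    moreover have "z \<notin> S" "b \<notin> S"
      using m(3) z(1) insert.hyps(2) by force+
    show ?thesis
    proof (intro exI[of _ "insert z X"] conjI)
      show "card (insert b S) \<le> card (insert z X) + 1"
        using X(1,2) insert.hyps(1) \<open>z \<notin> X\<close> \<open>b \<notin> S\<close> by simp
      show "\<forall>x\<in>insert z X. poly (pderiv p) x = 0 \<and> (\<exists>y\<in>insert b S. \<exists>z\<in>insert b S. y < x \<and> x < z)"
        using X_roots z m by blast
      show "insert z X \<inter> insert b S = {}"
        using X(3) \<open>z \<notin> X\<close> \<open>b \<notin> X\<close> \<open>z \<notin> S\<close> z(2) by auto
    qed (use X(1) in simp)
  qed
qed

lemma size_roots_within_le_pderiv:
  fixes p :: "real poly"
  assumes "pderiv p \<noteq> 0"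
  shows "size {#x \<in># proots p. x \<in> {c..d}#} \<le> size {#x \<in># proots (pderiv p). x \<in> {c..d}#} + 1"
proof -
  have p: "p \<noteq> 0"
    using assms by (metis pderiv_0)
  define S where "S = {x \<in> {c..d}. poly p x = 0}"
  have "finite S"
    unfolding S_def using poly_roots_finite[OF p] by simp
  moreover have "\<And>x. x \<in> S \<Longrightarrow> poly p x = 0"
    by (simp add: S_def)
  ultimately obtain X where X: "finite X" "card S \<le> card X + 1" "X \<inter> S = {}"
    and X_roots: "\<forall>x\<in>X. poly (pderiv p) x = 0 \<and> (\<exists>y\<in>S. \<exists>z\<in>S. y < x \<and> x < z)"
    using pderiv_roots_interlace by blast
  have X_within: "X \<subseteq> {c..d}"
  proof
    fix x
    assume "x \<in> X"
    then obtain y z where "y \<in> S" "z \<in> S" "y < x" "x < z"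
      using X_roots by blast
    then show "x \<in> {c..d}"
      by (auto simp: S_def)
  qed
  let ?A = "{#x \<in># proots p. x \<in> {c..d}#}" and ?B = "{#x \<in># proots (pderiv p). x \<in> {c..d}#}"
  have "?A + mset_set X \<subseteq># ?B + mset_set S"
  proof (rule mset_subset_eqI)
    fix x
    show "count (?A + mset_set X) x \<le> count (?B + mset_set S) x"
    proof (cases "x \<in> S")
      case True
      then have "x \<notin> X"
        using X(3) by blast
      moreover have "count ?A x = Suc (count ?B x)"
        using True order_pderiv[OF p] by (simp add: S_def p assms)
      ultimately show ?thesis
        using True \<open>finite S\<close> by simp
    next
      case False
      then have "count ?A x = 0"
        by (auto simp: S_def p order_root)
      moreover have "count (mset_set X) x \<le> count ?B x"
      proof (cases "x \<in> X")
        case True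
        then have "count ?B x \<noteq> 0"
          using X_roots X_within by (auto simp: assms order_root)
        then show ?thesis
          using True X(1) by simp
      qed simp
      ultimately show ?thesis
        using False by simp
    qed
  qed
  then have "size ?A + card X \<le> size ?B + card S"
    by (metis size_mset_mono size_mset_set size_union)
  then show ?thesis
    using X(2) by linarith
qed

lemma size_roots_within_le_higher_pderiv:
  fixes p :: "real poly"
  assumes "(pderiv ^^ k) p \<noteq> 0"
  shows "size {#x \<in># proots p. x \<in> {c..d}#}
           \<le> size {#x \<in># proots ((pderiv ^^ k) p). x \<in> {c..d}#} + k"
  using assms
proof (induction k)
  case (Suc k)
  have "(pderiv ^^ k) p \<noteq> 0"
    using Suc.prems by (metis funpow.simps(2) o_apply pderiv_0)
  then show ?case
    using Suc size_roots_within_le_pderiv[of "(pderiv ^^ k) p" c d] by simp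
qed simp

lemma higher_pderiv_root_within:
  fixes p :: "real poly"
  assumes "k < size {#x \<in># proots p. x \<in> {c..d}#}"
  obtains \<xi> where "\<xi> \<in> {c..d}" and "poly ((pderiv ^^ k) p) \<xi> = 0"
proof (cases "(pderiv ^^ k) p = 0")
  case True
  obtain x where "x \<in># {#x \<in># proots p. x \<in> {c..d}#}"
    using assms by (metis gr_implies_not0 multiset_nonemptyE size_empty)
  then show ?thesis
    using that True by auto
next
  case False
  then have "0 < size {#x \<in># proots ((pderiv ^^ k) p). x \<in> {c..d}#}"
    using assms size_roots_within_le_higher_pderiv[of k p c d] by linarith
  then obtain \<xi> where "\<xi> \<in># {#x \<in># proots ((pderiv ^^ k) p). x \<in> {c..d}#}"
    by (metis less_not_refl multiset_nonemptyE size_empty)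
  then show ?thesis
    using that False by auto
qed

section \<open>Products of linear factors and Hermite remainders\<close>

lemma prod_linear_factors_nonzero: "(\<Prod>z\<leftarrow>zs. [:-z, 1:]) \<noteq> (0 :: 'a :: idom poly)"
  by (auto simp: prod_list_zero_iff)

lemma proots_prod_linear_factors: "proots (\<Prod>z\<leftarrow>zs. [:-z, 1:]) = mset (zs :: 'a :: idom list)"
proof (induction zs)
  case (Cons z zs)
  have "proots [:-z, 1:] = {#z#}"
    using proots_linear_factor[of "-z"] by simp
  then show ?case
    using Cons prod_linear_factors_nonzero[of zs] by (simp del: mult_pCons_left add: proots_mult)
qed simp

lemma length_le_size_roots_within:
  fixes p :: "real poly"
  assumes "p \<noteq> 0" and "(\<Prod>z\<leftarrow>zs. [:-z, 1:]) dvd p" and "set zs \<subseteq> {c..d}"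
  shows "length zs \<le> size {#x \<in># proots p. x \<in> {c..d}#}"
proof -
  have "mset zs \<subseteq># proots p"
  proof (rule mset_subset_eqI)
    fix x
    have "count (mset zs) x = order x (\<Prod>z\<leftarrow>zs. [:-z, 1:])"
      by (metis count_proots proots_prod_linear_factors prod_linear_factors_nonzero)
    also have "\<dots> \<le> order x p"
      using assms(1,2) by (rule dvd_imp_order_le)
    finally show "count (mset zs) x \<le> count (proots p) x"
      using assms(1) by simp
  qed
  then have "mset zs \<subseteq># {#x \<in># proots p. x \<in> {c..d}#}"
    using filter_mset_mono_strong[of "mset zs" "proots p" "\<lambda>_. True" "\<lambda>x. x \<in> {c..d}"] assms(3)
    by (auto simp del: atLeastAtMost_iff)
  then show ?thesis
    by (metis size_mset size_mset_mono)
qed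

lemma degree_prod_linear_factors:
  "degree (\<Prod>z\<leftarrow>zs. [:-z, 1:]) = length (zs :: 'a :: idom list)"
  by (induction zs) (simp_all del: mult_pCons_left add: degree_mult_eq prod_linear_factors_nonzero)

lemma lead_coeff_prod_linear_factors:
  "lead_coeff (\<Prod>z\<leftarrow>zs. [:-z, 1:]) = (1 :: 'a :: idom)"
  by (induction zs) (simp_all del: mult_pCons_left add: lead_coeff_mult)

lemma poly_prod_linear_factors_root:
  "x \<in> set zs \<Longrightarrow> poly (\<Prod>z\<leftarrow>zs. [:-z, 1:]) x = (0 :: 'a :: comm_ring_1)"
  by (induction zs) (auto simp del: mult_pCons_left)

lemma higher_pderiv_eq_0_of_degree_less:
  fixes p :: "'a :: {comm_semiring_1, semiring_no_zero_divisors} poly"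
  assumes "degree p < k"
  shows "(pderiv ^^ k) p = 0"
  using assms by (intro poly_eqI) (simp add: coeff_higher_pderiv coeff_eq_0)

lemma higher_pderiv_degree:
  fixes p :: "'a :: {comm_semiring_1, semiring_no_zero_divisors, semiring_char_0} poly"
  shows "(pderiv ^^ degree p) p = [:fact (degree p) * lead_coeff p:]"
proof (rule poly_eqI)
  fix i
  show "coeff ((pderiv ^^ degree p) p) i = coeff [:fact (degree p) * lead_coeff p:] i"
    by (cases i) (simp_all add: coeff_higher_pderiv pochhammer_fact coeff_eq_0)
qed

text \<open>Remainder formula of Hermite interpolation: P mod (\<Prod>z\<leftarrow>zs. [:-z, 1:]) interpolates P
  at the points zs with multiplicities, and the error at x is this quotient times the nodal
  polynomial.\<close>
lemma poly_div_linear_factors_eq_higher_pderiv: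
  fixes P :: "real poly"
  assumes "set zs \<subseteq> {c..d}" and "x \<in> {c..d}"
  obtains \<xi> where "\<xi> \<in> {c..d}"
    and "poly ((pderiv ^^ length zs) P) \<xi> = fact (length zs) * poly (P div (\<Prod>z\<leftarrow>zs. [:-z, 1:])) x"
proof -
  define \<Omega> where "\<Omega> = (\<Prod>z\<leftarrow>zs. [:-z, 1:])"
  define m where "m = length zs"
  define Q where "Q = P div \<Omega>"
  define y where "y = poly Q x"
  define \<phi> where "\<phi> = (Q - [:y:]) * \<Omega>"
  have \<Omega>: "\<Omega> \<noteq> 0" "degree \<Omega> = m" "lead_coeff \<Omega> = 1"
    unfolding \<Omega>_def m_def
    by (rule prod_linear_factors_nonzero degree_prod_linear_factors
        lead_coeff_prod_linear_factors)+
  have "\<phi> + P mod \<Omega> + smult y \<Omega> = Q * \<Omega> + P mod \<Omega>"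
    by (simp add: \<phi>_def algebra_simps)
  then have P_eq: "\<phi> + P mod \<Omega> + smult y \<Omega> = P"
    by (simp add: Q_def)
  have "(pderiv ^^ m) (P mod \<Omega>) = 0"
    using degree_mod_less[OF \<Omega>(1), of P] \<Omega>(2) higher_pderiv_eq_0_of_degree_less by fastforce
  moreover have "(pderiv ^^ m) \<Omega> = [:fact m:]"
    using higher_pderiv_degree[of \<Omega>] \<Omega> by simp
  ultimately have "(pderiv ^^ m) (\<phi> + P mod \<Omega> + smult y \<Omega>) = (pderiv ^^ m) \<phi> + [:fact m * y:]"
    by (simp add: higher_pderiv_add higher_pderiv_smult)
  then have P_deriv: "(pderiv ^^ m) P = (pderiv ^^ m) \<phi> + [:fact m * y:]"
    by (simp only: P_eq)
  obtain \<xi> where "\<xi> \<in> {c..d}" "poly ((pderiv ^^ m) \<phi>) \<xi> = 0"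
  proof (cases "\<phi> = 0")
    case True
    then show ?thesis
      using that assms(2) by simp
  next
    case False
    have "[:-x, 1:] dvd Q - [:y:]"
      by (simp add: poly_eq_0_iff_dvd[symmetric] y_def)
    then have "(\<Prod>z\<leftarrow>x # zs. [:-z, 1:]) dvd \<phi>"
      unfolding \<phi>_def \<Omega>_def by (simp del: mult_pCons_left)
    then have "m < size {#z \<in># proots \<phi>. z \<in> {c..d}#}"
      using length_le_size_roots_within[OF False] assms unfolding m_def by fastforce
    then show ?thesis
      using higher_pderiv_root_within that by blast
  qed
  then show ?thesis
    using that P_deriv unfolding m_def Q_def \<Omega>_def y_def by simp
qed

section \<open>Taylor polynomials of the exponential\<close>

definition exp_taylor_poly :: "real \<Rightarrow> nat \<Rightarrow> real poly" where
  "exp_taylor_poly c N = (\<Sum>j\<le>N. monom (c ^ j / fact j) j)"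

lemma coeff_exp_taylor_poly: "coeff (exp_taylor_poly c N) j = (if j \<le> N then c ^ j / fact j else 0)"
  by (simp add: exp_taylor_poly_def coeff_sum coeff_monom)

lemma poly_exp_taylor_poly: "poly (exp_taylor_poly c N) x = (\<Sum>j\<le>N. (c * x) ^ j / fact j)"
  by (simp add: exp_taylor_poly_def poly_sum poly_monom power_mult_distrib)

lemma pderiv_exp_taylor_poly: "pderiv (exp_taylor_poly c (Suc N)) = smult c (exp_taylor_poly c N)"
  by (rule poly_eqI) (simp add: coeff_pderiv coeff_exp_taylor_poly)

lemma higher_pderiv_exp_taylor_poly:
  "(pderiv ^^ k) (exp_taylor_poly c (N + k)) = smult (c ^ k) (exp_taylor_poly c N)"
proof (induction k arbitrary: N)
  case (Suc k)
  have "(pderiv ^^ Suc k) (exp_taylor_poly c (N + Suc k)) = pderiv ((pderiv ^^ k) (exp_taylor_poly c (Suc N + k)))"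
    by simp
  also have "\<dots> = smult (c ^ Suc k) (exp_taylor_poly c N)"
    using Suc.IH[of "Suc N"] by (simp add: pderiv_smult pderiv_exp_taylor_poly mult.commute)
  finally show ?case .
qed simp

lemma abs_higher_pderiv_exp_taylor_poly_le:
  assumes "0 \<le> t" and "\<xi> \<in> {0..M}"
  shows "\<bar>poly ((pderiv ^^ k) (exp_taylor_poly (- t) (K + k))) \<xi>\<bar>
           \<le> t ^ k * (1 + exp (t * M) * (t * M) ^ Suc K / fact K)"
proof -
  have "\<bar>exp (- t * \<xi>) - (\<Sum>i\<le>K. (- t * \<xi>) ^ i / fact i)\<bar>
      \<le> exp \<bar>- t * \<xi>\<bar> * \<bar>- t * \<xi>\<bar> ^ Suc K / fact K"
    using Taylor_exp_field[of "- t * \<xi>" K] by simp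
  also have "\<dots> \<le> exp (t * M) * (t * M) ^ Suc K / fact K"
    using assms by (intro divide_right_mono mult_mono power_mono) (auto simp: abs_mult mult_left_mono)
  moreover have "0 < exp (- t * \<xi>)" "exp (- t * \<xi>) \<le> 1"
    using assms by simp_all
  ultimately have "\<bar>\<Sum>i\<le>K. (- t * \<xi>) ^ i / fact i\<bar> \<le> 1 + exp (t * M) * (t * M) ^ Suc K / fact K"
    by linarith
  then show ?thesis
    using assms
    by (simp add: higher_pderiv_exp_taylor_poly poly_exp_taylor_poly abs_mult power_abs mult_left_mono)
qed

lemma exp_partial_sums_tendsto: "(\<lambda>K. \<Sum>i\<le>K. y ^ i / fact i) \<longlonglongrightarrow> exp (y :: real)"
proof -
  have "(\<lambda>K. \<Sum>i<K. y ^ i /\<^sub>R fact i) \<longlonglongrightarrow> exp y"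
    using exp_converges[of y] by (simp add: sums_def)
  then have "(\<lambda>K. \<Sum>i<Suc K. y ^ i /\<^sub>R fact i) \<longlonglongrightarrow> exp y"
    by (rule LIMSEQ_Suc)
  then show ?thesis
    by (simp add: lessThan_Suc_atMost divide_inverse_commute)
qed

lemma abs_exp_partial_sum_le: "\<bar>\<Sum>i\<le>K. y ^ i / fact i\<bar> \<le> exp \<bar>y :: real\<bar>"
proof -
  have "(\<lambda>i. \<bar>y\<bar> ^ i / fact i) sums exp \<bar>y\<bar>"
    using exp_converges[of "\<bar>y\<bar>"] by (simp add: divide_inverse_commute)
  then have "(\<Sum>i\<le>K. \<bar>y\<bar> ^ i / fact i) \<le> exp \<bar>y\<bar>"
    unfolding sums_iff using sum_le_suminf[of "\<lambda>i. \<bar>y\<bar> ^ i / fact i" "{..K}"] by auto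
  moreover have "\<bar>\<Sum>i\<le>K. y ^ i / fact i\<bar> \<le> (\<Sum>i\<le>K. \<bar>y\<bar> ^ i / fact i)"
    by (rule order_trans[OF sum_abs]) (simp add: power_abs)
  ultimately show ?thesis
    by linarith
qed

lemma power_div_fact_tendsto_zero: "(\<lambda>K. B ^ K / fact K) \<longlonglongrightarrow> (0 :: real)"
  using summable_LIMSEQ_zero[OF summable_exp[of B]] by (simp add: divide_inverse_commute)

lemma continuous_times_powr_integrable:
  fixes f :: "real \<Rightarrow> real"
  assumes "continuous_on {0..a} f" and "0 \<le> a" and "0 < \<alpha>"
  shows "(\<lambda>x. f x * x powr (\<alpha> - 1)) integrable_on {0..a}"
proof -
  have "(\<lambda>x. x powr (\<alpha> - 1)) integrable_on {0..a}"
    using has_integral_powr_from_0[of "\<alpha> - 1" a] assms(2,3) by auto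
  then have "(\<lambda>x. x powr (\<alpha> - 1)) absolutely_integrable_on {0..a}"
    by (rule nonnegative_absolutely_integrable_1) simp
  moreover have "bounded (f ` {0..a})"
    using compact_continuous_image[OF assms(1)] by (simp add: compact_imp_bounded)
  moreover have "f \<in> borel_measurable (lebesgue_on {0..a})"
    using assms(1) by (simp add: continuous_imp_measurable_on_sets_lebesgue)
  ultimately have "(\<lambda>x. f x * x powr (\<alpha> - 1)) absolutely_integrable_on {0..a}"
    by (intro absolutely_integrable_bounded_measurable_product_real) auto
  then show ?thesis
    using set_lebesgue_integral_eq_integral(1) by blast
qed

section \<open>Shifted Chebyshev polynomials\<close>

text \<open>The polynomial 2 (a/4)^m T_m(2x/a - 1), T_m the Chebyshev polynomial of the first kind;
  it is monic of degree m for m \<ge> 1.\<close>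
fun shifted_chebyshev :: "real \<Rightarrow> nat \<Rightarrow> real poly" where
  "shifted_chebyshev a 0 = [:2:]"
| "shifted_chebyshev a (Suc 0) = [:-a/2, 1:]"
| "shifted_chebyshev a (Suc (Suc m)) =
     [:-a/2, 1:] * shifted_chebyshev a (Suc m) - smult (a^2/16) (shifted_chebyshev a m)"

lemma poly_shifted_chebyshev_cos:
  "poly (shifted_chebyshev a m) (a/2 + a/2 * cos \<theta>) = 2 * (a/4)^m * cos (real m * \<theta>)"
proof (induction a m rule: shifted_chebyshev.induct)
  case (2 a)
  then show ?case by (simp add: field_simps)
next
  case (3 a m)
  have cos_rec: "cos (real (Suc (Suc m)) * \<theta>) = 2 * cos \<theta> * cos (real (Suc m) * \<theta>) - cos (real m * \<theta>)"
    using cos_add[of "real (Suc m) * \<theta>" \<theta>] cos_diff[of "real (Suc m) * \<theta>" \<theta>]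
    by (simp add: distrib_right)
  let ?y = "a/2 + a/2 * cos \<theta>"
  have "poly (shifted_chebyshev a (Suc (Suc m))) ?y
      = a/2 * cos \<theta> * poly (shifted_chebyshev a (Suc m)) ?y - a^2/16 * poly (shifted_chebyshev a m) ?y"
    by (simp add: algebra_simps)
  also have "\<dots> = 2 * (a/4)^(Suc (Suc m)) * (2 * cos \<theta> * cos (real (Suc m) * \<theta>) - cos (real m * \<theta>))"
    using 3 by (simp add: power2_eq_square algebra_simps)
  finally show ?case
    by (simp only: cos_rec)
qed simp

lemma degree_coeff_shifted_chebyshev:
  "degree (shifted_chebyshev a m) \<le> m \<and> coeff (shifted_chebyshev a m) m = (if m = 0 then 2 else 1)"
proof (induction a m rule: shifted_chebyshev.induct)
  case (3 a m)
  let ?p = "shifted_chebyshev a (Suc m)"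
  have "degree ([:-a/2, 1:] * ?p) \<le> Suc (Suc m)"
    using degree_mult_le[of "[:-a/2, 1:]" ?p] 3 by simp
  moreover have "degree (smult (a^2/16) (shifted_chebyshev a m)) \<le> Suc (Suc m)"
    using 3 by (meson degree_smult_le le_Suc_eq order_trans)
  moreover have "coeff ?p (Suc (Suc m)) = 0" "coeff (shifted_chebyshev a m) (Suc (Suc m)) = 0"
    using 3 by (auto intro: coeff_eq_0)
  ultimately show ?case
    using 3 by (simp add: degree_diff_le mult_pCons_left)
qed simp_all

lemma abs_poly_shifted_chebyshev_le:
  assumes "0 < a" and "x \<in> {0..a}"
  shows "\<bar>poly (shifted_chebyshev a m) x\<bar> \<le> 2 * (a/4)^m"
proof -
  define \<theta> where "\<theta> = arccos (2 * x / a - 1)"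
  have "cos \<theta> = 2 * x / a - 1"
    unfolding \<theta>_def using assms by (intro cos_arccos) (auto simp: field_simps)
  then have "x = a/2 + a/2 * cos \<theta>"
    using assms by (simp add: field_simps)
  then have "poly (shifted_chebyshev a m) x = 2 * (a/4)^m * cos (real m * \<theta>)"
    by (simp only: poly_shifted_chebyshev_cos)
  then have "\<bar>poly (shifted_chebyshev a m) x\<bar> = 2 * (a/4)^m * \<bar>cos (real m * \<theta>)\<bar>"
    using assms by (simp add: abs_mult)
  also have "\<dots> \<le> 2 * (a/4)^m"
    using assms by (simp add: mult_left_le)
  finally show ?thesis .
qed

section \<open>The Gauss-Jacobi rule\<close>

locale gauss_jacobi =
  fixes a \<alpha> :: real and n :: nat and s w :: "nat \<Rightarrow> real"
  assumes a_pos: "0 < a" and alpha_pos: "0 < \<alpha>" and n_pos: "0 < n"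
    and exact: "gauss_jacobi_rule a \<alpha> n s w"
begin

definition weighted_integral :: "(real \<Rightarrow> real) \<Rightarrow> real" where
  "weighted_integral f = integral {0..a} (\<lambda>x. f x * x powr (\<alpha> - 1))"

definition quadrature :: "(real \<Rightarrow> real) \<Rightarrow> real" where
  "quadrature f = (\<Sum>k = 1..n. w k * f (s k))"

definition quadrature_error :: "(real \<Rightarrow> real) \<Rightarrow> real" where
  "quadrature_error f = weighted_integral f - quadrature f"

definition nodes :: "real list" where
  "nodes = map s [1..<Suc n]"

definition node_poly :: "real poly" where
  "node_poly = (\<Prod>z\<leftarrow>nodes. [:-z, 1:])"

lemma weighted_integrable:
  "continuous_on {0..a} f \<Longrightarrow> (\<lambda>x. f x * x powr (\<alpha> - 1)) integrable_on {0..a}"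
  using a_pos alpha_pos by (intro continuous_times_powr_integrable) auto

lemma weighted_integrable_poly: "(\<lambda>x. poly p x * x powr (\<alpha> - 1)) integrable_on {0..a}"
  by (intro weighted_integrable continuous_intros)

lemma weighted_integral_poly_add:
  "weighted_integral (poly (p + q)) = weighted_integral (poly p) + weighted_integral (poly q)"
  unfolding weighted_integral_def
  by (simp add: distrib_right integral_add weighted_integrable_poly)

lemma quadrature_error_poly_add:
  "quadrature_error (poly (p + q)) = quadrature_error (poly p) + quadrature_error (poly q)"
  by (simp add: quadrature_error_def weighted_integral_poly_add quadrature_def distrib_left sum.distrib)

lemma weighted_integral_poly_mono:
  assumes "\<And>x. x \<in> {0..a} \<Longrightarrow> poly p x \<le> poly q x"
  shows "weighted_integral (poly p) \<le> weighted_integral (poly q)"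
  unfolding weighted_integral_def using assms
  by (intro integral_le weighted_integrable_poly mult_right_mono) auto

lemma weighted_integral_poly_pos:
  assumes "p \<noteq> 0" and nonneg: "\<And>x. x \<in> {0..a} \<Longrightarrow> 0 \<le> poly p x"
  shows "0 < weighted_integral (poly p)"
proof (rule ccontr)
  assume "\<not> 0 < weighted_integral (poly p)"
  define g where "g x = poly p x * x powr (\<alpha> - 1)" for x
  have g_nonneg: "0 \<le> g x" if "x \<in> {0..a}" for x
    unfolding g_def using nonneg[OF that] by simp
  have g_int: "g integrable_on {0..a}"
    unfolding g_def by (rule weighted_integrable_poly)
  have g_int_half: "g integrable_on {a/2..a}"
    using a_pos by (intro integrable_on_subinterval[OF g_int]) auto
  have "integral {a/2..a} g \<le> integral {0..a} g"
    using a_pos g_nonneg by (intro integral_subset_le g_int g_int_half) auto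
  moreover have "0 \<le> integral {a/2..a} g"
    using a_pos g_nonneg by (intro integral_nonneg g_int_half) auto
  ultimately have "integral {a/2..a} g = 0"
    using \<open>\<not> 0 < weighted_integral (poly p)\<close> unfolding weighted_integral_def g_def by simp
  then have g_int_0: "(g has_integral 0) (cbox (a/2) a)"
    using g_int_half by (metis cbox_interval has_integral_integral)
  have g_cont: "continuous_on (cbox (a/2) a) g"
    unfolding g_def cbox_interval using a_pos by (intro continuous_intros continuous_on_powr') auto
  have "g x = 0" if "x \<in> {a/2..a}" for x
  proof (rule has_integral_0_cbox_imp_0[OF g_cont _ g_int_0])
    show "0 \<le> g y" if "y \<in> box (a/2) a" for y
      using that a_pos g_nonneg by (simp add: box_real)
    show "box (a/2) a \<noteq> {}" "x \<in> cbox (a/2) a"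
      using a_pos that by (simp_all add: box_real cbox_interval)
  qed
  then have "{a/2..a} \<subseteq> {x. poly p x = 0}"
    using a_pos by (auto simp: g_def)
  moreover have "infinite {a/2..a}"
    using a_pos by (intro infinite_Icc) simp
  ultimately show False
    using poly_roots_finite[OF \<open>p \<noteq> 0\<close>] finite_subset by blast
qed

lemma weighted_integral_eq_quadrature:
  "degree p \<le> 2 * n - 1 \<Longrightarrow> weighted_integral (poly p) = quadrature (poly p)"
  using exact unfolding gauss_jacobi_rule_def weighted_integral_def quadrature_def
  by (blast intro: integral_unique)

lemma length_nodes: "length nodes = n"
  by (simp add: nodes_def)

lemma set_nodes: "set nodes = s ` {1..n}"
  by (auto simp: nodes_def image_iff)

lemma degree_node_poly: "degree node_poly = n"
  by (simp add: node_poly_def degree_prod_linear_factors length_nodes)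

lemma lead_coeff_node_poly: "lead_coeff node_poly = 1"
  unfolding node_poly_def by (rule lead_coeff_prod_linear_factors)

lemma node_poly_nonzero: "node_poly \<noteq> 0"
  unfolding node_poly_def by (rule prod_linear_factors_nonzero)

lemma poly_node_poly_node: "k \<in> {1..n} \<Longrightarrow> poly node_poly (s k) = 0"
  unfolding node_poly_def by (rule poly_prod_linear_factors_root) (simp add: set_nodes)

lemma quadrature_node_poly_mult: "quadrature (poly (node_poly * p)) = 0"
  by (simp add: quadrature_def poly_node_poly_node)

lemma nodes_nonneg:
  assumes "k \<in> {1..n}"
  shows "0 \<le> s k"
proof (rule ccontr)
  assume "\<not> 0 \<le> s k"
  obtain r where r: "node_poly = [:-s k, 1:] * r"
    using poly_node_poly_node[OF assms] by (metis dvdE poly_eq_0_iff_dvd)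
  have "r \<noteq> 0"
    using node_poly_nonzero r by auto
  then have "degree r = n - 1"
    using degree_node_poly degree_mult_eq[of "[:-s k, 1:]" r] by (simp del: mult_pCons_left add: r)
  then have "degree (node_poly * r) \<le> 2 * n - 1"
    using degree_mult_le[of node_poly r] degree_node_poly by simp
  then have "weighted_integral (poly (node_poly * r)) = 0"
    by (simp add: weighted_integral_eq_quadrature quadrature_node_poly_mult)
  moreover have "0 < weighted_integral (poly (node_poly * r))"
  proof (rule weighted_integral_poly_pos)
    show "node_poly * r \<noteq> 0"
      using node_poly_nonzero \<open>r \<noteq> 0\<close> by simp
    show "0 \<le> poly (node_poly * r) x" if "x \<in> {0..a}" for x
    proof -
      have "poly (node_poly * r) x = (x - s k) * (poly r x)\<^sup>2"
        by (simp add: r power2_eq_square algebra_simps)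
      then show ?thesis
        using that \<open>\<not> 0 \<le> s k\<close> by simp
    qed
  qed
  ultimately show False
    by simp
qed

lemma node_poly_square: "node_poly\<^sup>2 = (\<Prod>z\<leftarrow>nodes @ nodes. [:-z, 1:])"
  by (simp add: node_poly_def power2_eq_square)

lemma abs_quadrature_error_poly_le:
  assumes "a \<le> M" and nodes_le: "\<And>k. k \<in> {1..n} \<Longrightarrow> s k \<le> M"
    and deriv_bound: "\<And>\<xi>. \<xi> \<in> {0..M} \<Longrightarrow> \<bar>poly ((pderiv ^^ (2 * n)) P) \<xi>\<bar> \<le> C"
  shows "\<bar>quadrature_error (poly P)\<bar> \<le> C / fact (2 * n) * weighted_integral (poly (node_poly\<^sup>2))"
proof -
  define Q where "Q = P div node_poly\<^sup>2"
  have "degree (P mod node_poly\<^sup>2) \<le> 2 * n - 1"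
    using degree_mod_less[of "node_poly\<^sup>2" P] node_poly_nonzero n_pos
    by (cases "P mod node_poly\<^sup>2 = 0") (auto simp: degree_power_eq degree_node_poly)
  then have "quadrature_error (poly (P mod node_poly\<^sup>2)) = 0"
    by (simp add: quadrature_error_def weighted_integral_eq_quadrature)
  moreover have "quadrature (poly (Q * node_poly\<^sup>2)) = 0"
    using quadrature_node_poly_mult[of "Q * node_poly"] by (simp add: power2_eq_square ac_simps)
  moreover have "Q * node_poly\<^sup>2 + P mod node_poly\<^sup>2 = P"
    unfolding Q_def by (rule div_mult_mod_eq)
  ultimately have error_eq: "quadrature_error (poly P) = weighted_integral (poly (Q * node_poly\<^sup>2))"
    by (metis quadrature_error_poly_add quadrature_error_def add_0_right diff_zero)
  have Q_bound: "\<bar>poly Q x\<bar> \<le> C / fact (2 * n)" if "x \<in> {0..a}" for x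
  proof -
    have "set (nodes @ nodes) \<subseteq> {0..M}"
      using nodes_nonneg nodes_le by (auto simp: set_nodes)
    moreover have "x \<in> {0..M}"
      using that \<open>a \<le> M\<close> by simp
    ultimately obtain \<xi> where "\<xi> \<in> {0..M}"
      and "poly ((pderiv ^^ (2 * n)) P) \<xi> = fact (2 * n) * poly Q x"
      using poly_div_linear_factors_eq_higher_pderiv[of "nodes @ nodes" 0 M x P]
      by (auto simp: length_nodes Q_def node_poly_square mult_2)
    then have "fact (2 * n) * \<bar>poly Q x\<bar> \<le> C"
      using deriv_bound by (metis abs_mult abs_of_pos fact_gt_zero)
    then show ?thesis
      by (simp add: field_simps)
  qed
  have "norm (weighted_integral (poly (Q * node_poly\<^sup>2)))
      \<le> integral {0..a} (\<lambda>x. C / fact (2 * n) * (poly (node_poly\<^sup>2) x * x powr (\<alpha> - 1)))"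
    unfolding weighted_integral_def
  proof (rule integral_norm_bound_integral[OF weighted_integrable_poly])
    show "(\<lambda>x. C / fact (2 * n) * (poly (node_poly\<^sup>2) x * x powr (\<alpha> - 1))) integrable_on {0..a}"
      using weighted_integrable_poly[of "smult (C / fact (2 * n)) (node_poly\<^sup>2)"] by (simp add: mult.assoc)
    fix x
    assume "x \<in> {0..a}"
    then show "norm (poly (Q * node_poly\<^sup>2) x * x powr (\<alpha> - 1))
        \<le> C / fact (2 * n) * (poly (node_poly\<^sup>2) x * x powr (\<alpha> - 1))"
      using mult_right_mono[OF Q_bound[of x], of "poly (node_poly\<^sup>2) x * x powr (\<alpha> - 1)"]
      by (simp add: abs_mult mult.assoc)
  qed
  then show ?thesis
    by (simp add: error_eq weighted_integral_def)
qed

lemma quadrature_error_exp_taylor_tendsto: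
  "(\<lambda>N. quadrature_error (poly (exp_taylor_poly c N))) \<longlonglongrightarrow> quadrature_error (\<lambda>x. exp (c * x))"
proof -
  have "(\<lambda>N. integral {0..a} (\<lambda>x. poly (exp_taylor_poly c N) x * x powr (\<alpha> - 1)))
      \<longlonglongrightarrow> integral {0..a} (\<lambda>x. exp (c * x) * x powr (\<alpha> - 1))"
  proof (rule dominated_convergence(2))
    show "(\<lambda>x. exp (\<bar>c\<bar> * a) * x powr (\<alpha> - 1)) integrable_on {0..a}"
      by (intro weighted_integrable continuous_intros)
    show "norm (poly (exp_taylor_poly c N) x * x powr (\<alpha> - 1)) \<le> exp (\<bar>c\<bar> * a) * x powr (\<alpha> - 1)"
      if "x \<in> {0..a}" for N x
    proof -
      have "\<bar>poly (exp_taylor_poly c N) x\<bar> \<le> exp \<bar>c * x\<bar>"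
        unfolding poly_exp_taylor_poly by (rule abs_exp_partial_sum_le)
      also have "\<dots> \<le> exp (\<bar>c\<bar> * a)"
        using that by (simp add: abs_mult mult_left_mono)
      finally show ?thesis
        by (simp add: abs_mult mult_right_mono)
    qed
    show "(\<lambda>N. poly (exp_taylor_poly c N) x * x powr (\<alpha> - 1)) \<longlonglongrightarrow> exp (c * x) * x powr (\<alpha> - 1)"
      for x
      unfolding poly_exp_taylor_poly by (intro tendsto_mult_right exp_partial_sums_tendsto)
  qed (rule weighted_integrable_poly)
  moreover have "(\<lambda>N. quadrature (poly (exp_taylor_poly c N))) \<longlonglongrightarrow> quadrature (\<lambda>x. exp (c * x))"
    unfolding quadrature_def poly_exp_taylor_poly
    by (intro tendsto_sum tendsto_mult_left exp_partial_sums_tendsto)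
  ultimately show ?thesis
    unfolding quadrature_error_def weighted_integral_def by (rule tendsto_diff)
qed

lemma abs_quadrature_error_exp_le:
  assumes "0 \<le> t"
  shows "\<bar>quadrature_error (\<lambda>x. exp (- t * x))\<bar>
           \<le> t ^ (2 * n) / fact (2 * n) * weighted_integral (poly (node_poly\<^sup>2))"
proof -
  \<comment> \<open>The nodes are only known to be nonnegative, so the derivatives are bounded on [0, M].\<close>
  define M where "M = max a (Max (s ` {1..n}))"
  define B where "B = t * M"
  define r where "r K = exp B * B ^ Suc K / fact K" for K
  have nodes_le: "s k \<le> M" if "k \<in> {1..n}" for k
    unfolding M_def using that by (intro max.coboundedI2 Max_ge) auto
  have deriv_bound: "\<bar>poly ((pderiv ^^ (2 * n)) (exp_taylor_poly (- t) (K + 2 * n))) \<xi>\<bar>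
      \<le> t ^ (2 * n) * (1 + r K)" if "\<xi> \<in> {0..M}" for K \<xi>
    unfolding r_def B_def using assms that by (rule abs_higher_pderiv_exp_taylor_poly_le)
  have error_bound: "\<bar>quadrature_error (poly (exp_taylor_poly (- t) (K + 2 * n)))\<bar>
      \<le> t ^ (2 * n) * (1 + r K) / fact (2 * n) * weighted_integral (poly (node_poly\<^sup>2))" for K
    using abs_quadrature_error_poly_le[OF _ nodes_le deriv_bound] by (simp add: M_def)
  have error_lim: "(\<lambda>K. \<bar>quadrature_error (poly (exp_taylor_poly (- t) (K + 2 * n)))\<bar>)
      \<longlonglongrightarrow> \<bar>quadrature_error (\<lambda>x. exp (- t * x))\<bar>"
    using LIMSEQ_ignore_initial_segment[OF quadrature_error_exp_taylor_tendsto, of "- t" "2 * n"]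
    by (intro tendsto_rabs) simp
  have "r \<longlonglongrightarrow> 0"
    using tendsto_mult_right_zero[OF power_div_fact_tendsto_zero[of B], of "exp B * B"]
    unfolding r_def[abs_def] by (simp add: mult.assoc)
  then have bound_lim: "(\<lambda>K. t ^ (2 * n) * (1 + r K) / fact (2 * n) * weighted_integral (poly (node_poly\<^sup>2)))
      \<longlonglongrightarrow> t ^ (2 * n) * (1 + 0) / fact (2 * n) * weighted_integral (poly (node_poly\<^sup>2))"
    by (intro tendsto_intros) simp_all
  have "\<bar>quadrature_error (\<lambda>x. exp (- t * x))\<bar>
      \<le> t ^ (2 * n) * (1 + 0) / fact (2 * n) * weighted_integral (poly (node_poly\<^sup>2))"
    using error_bound by (intro tendsto_le[OF trivial_limit_sequentially bound_lim error_lim] always_eventually) simp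
  then show ?thesis
    by simp
qed

lemma weighted_integral_monom:
  "weighted_integral (poly (monom c k)) = c * (a powr (real k + \<alpha>) / (real k + \<alpha>))"
proof -
  have integral_powr:
    "((\<lambda>x. x powr (real k + \<alpha> - 1)) has_integral a powr (real k + \<alpha>) / (real k + \<alpha>)) {0..a}"
    using has_integral_powr_from_0[of "real k + \<alpha> - 1" a] alpha_pos a_pos by simp
  have "poly (monom c k) x * x powr (\<alpha> - 1) = c * x powr (real k + \<alpha> - 1)" if "0 \<le> x" for x
  proof (cases "x = 0")
    case False
    then show ?thesis
      using that by (simp add: poly_monom powr_realpow[symmetric] powr_add[symmetric] add_diff_eq)
  qed (use alpha_pos in \<open>simp add: poly_monom\<close>)
  then have "weighted_integral (poly (monom c k)) = integral {0..a} (\<lambda>x. c * x powr (real k + \<alpha> - 1))"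
    unfolding weighted_integral_def by (intro integral_cong) simp
  also have "\<dots> = c * (a powr (real k + \<alpha>) / (real k + \<alpha>))"
    using integral_unique[OF integral_powr] by simp
  finally show ?thesis .
qed

lemma weighted_integral_node_poly_square_le_monic:
  assumes "degree q = n" and "lead_coeff q = 1"
  shows "weighted_integral (poly (node_poly\<^sup>2)) \<le> weighted_integral (poly (q\<^sup>2))"
proof -
  define r where "r = q - node_poly"
  have "degree r \<le> n - 1"
  proof (rule degree_le, intro allI impI)
    fix i
    assume "n - 1 < i"
    then consider "i = n" | "n < i"
      by linarith
    then show "coeff r i = 0"
      using assms degree_node_poly lead_coeff_node_poly by cases (auto simp: r_def coeff_eq_0)
  qed
  then have "degree (node_poly * r) \<le> 2 * n - 1"
    using degree_mult_le[of node_poly r] degree_node_poly n_pos by simp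
  then have "weighted_integral (poly (node_poly * r)) = 0"
    by (simp add: weighted_integral_eq_quadrature quadrature_node_poly_mult)
  moreover have "0 \<le> weighted_integral (poly (r\<^sup>2))"
    using weighted_integral_poly_mono[of 0 "r\<^sup>2"] by (simp add: weighted_integral_def)
  moreover have "q\<^sup>2 = node_poly\<^sup>2 + (node_poly * r + node_poly * r) + r\<^sup>2"
    by (simp add: r_def power2_eq_square algebra_simps)
  then have "weighted_integral (poly (q\<^sup>2)) = weighted_integral (poly (node_poly\<^sup>2))
      + (weighted_integral (poly (node_poly * r)) + weighted_integral (poly (node_poly * r)))
      + weighted_integral (poly (r\<^sup>2))"
    by (simp only: weighted_integral_poly_add)
  ultimately show ?thesis
    by simp
qed

lemma weighted_integral_node_poly_square_le:
  assumes "1 < n"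
  shows "weighted_integral (poly (node_poly\<^sup>2)) \<le> 4 * (a/4) ^ (2 * (n - 1)) * (a powr (\<alpha> + 2) / (\<alpha> + 2))"
proof -
  define T where "T = shifted_chebyshev a (n - 1)"
  define C where "C = 4 * (a/4) ^ (2 * (n - 1))"
  have "degree T \<le> n - 1" "coeff T (n - 1) = 1"
    using degree_coeff_shifted_chebyshev[of a "n - 1"] assms by (auto simp: T_def)
  then have "T \<noteq> 0" "degree T = n - 1"
    using le_degree[of T "n - 1"] by auto
  then have "degree (pCons 0 T) = n" "lead_coeff (pCons 0 T) = 1"
    using assms \<open>coeff T (n - 1) = 1\<close> by (cases n; simp)+
  then have "weighted_integral (poly (node_poly\<^sup>2)) \<le> weighted_integral (poly ((pCons 0 T)\<^sup>2))"
    by (rule weighted_integral_node_poly_square_le_monic)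
  also have "\<dots> \<le> weighted_integral (poly (monom C 2))"
  proof (rule weighted_integral_poly_mono)
    fix x
    assume "x \<in> {0..a}"
    then have "(poly T x)\<^sup>2 \<le> (2 * (a/4) ^ (n - 1))\<^sup>2"
      using abs_poly_shifted_chebyshev_le[OF a_pos] power_mono[of "\<bar>poly T x\<bar>" _ 2]
      by (metis T_def abs_ge_zero power2_abs)
    then show "poly ((pCons 0 T)\<^sup>2) x \<le> poly (monom C 2) x"
      using mult_left_mono[of "(poly T x)\<^sup>2" "(2 * (a/4) ^ (n - 1))\<^sup>2" "x\<^sup>2"]
      by (simp add: C_def poly_monom power_mult_distrib power_mult[symmetric] mult.commute)
  qed
  also have "\<dots> = C * (a powr (\<alpha> + 2) / (\<alpha> + 2))"
    by (simp add: weighted_integral_monom add.commute)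
  finally show ?thesis
    by (simp add: C_def)
qed

end

section \<open>Numerical estimates\<close>

lemma one_plus_inverse_powr_le_exp_one:
  fixes x :: real
  assumes "0 < x"
  shows "(1 + 1 / x) powr x \<le> exp 1"
proof -
  have "x * ln (1 + 1 / x) \<le> x * (1 / x)"
    using assms by (intro mult_left_mono ln_add_one_self_le_self) auto
  then show ?thesis
    using assms by (simp add: powr_def)
qed

lemma exp_one_le_one_plus_inverse_powr:
  fixes x :: real
  assumes "0 < x"
  shows "exp 1 \<le> (1 + 1 / x) powr (x + 1)"
proof -
  have "ln (x / (x + 1)) \<le> x / (x + 1) - 1"
    using assms by (intro ln_le_minus_one) simp
  moreover have "ln (x / (x + 1)) = - ln (1 + 1 / x)"
    using assms by (simp add: ln_div field_simps)
  ultimately have "1 \<le> (x + 1) * ln (1 + 1 / x)"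
    using assms by (simp add: field_simps)
  moreover have "0 < 1 + 1 / x"
    using assms by (simp add: add_pos_pos)
  ultimately show ?thesis
    by (simp add: powr_def)
qed

lemma exp_one_mult_power_le_Suc_power:
  assumes "0 < m"
  shows "exp 1 * real m ^ Suc m \<le> real (Suc m) ^ Suc m"
proof -
  have "exp 1 \<le> (1 + 1 / real m) powr (real m + 1)"
    using assms by (intro exp_one_le_one_plus_inverse_powr) simp
  also have "\<dots> = (real (Suc m) / real m) powr real (Suc m)"
  proof -
    have "1 + 1 / real m = real (Suc m) / real m" "real m + 1 = real (Suc m)"
      using assms by (simp_all add: field_simps)
    then show ?thesis
      by (simp only:)
  qed
  also have "\<dots> = (real (Suc m) / real m) ^ Suc m"
    using assms by (intro powr_realpow) simp
  finally show ?thesis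
    using assms by (simp add: power_divide field_simps)
qed

lemma fact_ge_exp_one_mult_power:
  assumes "1 \<le> m"
  shows "exp 1 * (real m / exp 1) ^ m \<le> fact m"
  using assms
proof (induction rule: dec_induct)
  case (step m)
  have "(1 + 1 / real m) ^ m \<le> exp 1"
    using one_plus_inverse_powr_le_exp_one[of "real m"] step.hyps
    by (simp add: powr_realpow add_pos_pos)
  then have "(real m + 1) ^ m \<le> exp 1 * real m ^ m"
    using step.hyps by (simp add: field_simps power_divide)
  have "exp 1 * (real (Suc m) / exp 1) ^ Suc m = (real m + 1) ^ m * (real m + 1) / exp 1 ^ m"
    by (simp add: power_divide add.commute mult.commute)
  also have "\<dots> \<le> exp 1 * real m ^ m * (real m + 1) / exp 1 ^ m"
    using \<open>(real m + 1) ^ m \<le> exp 1 * real m ^ m\<close> by (intro divide_right_mono mult_right_mono) auto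
  also have "\<dots> = (real m + 1) * (exp 1 * (real m / exp 1) ^ m)"
    by (simp add: power_divide)
  also have "\<dots> \<le> (real m + 1) * fact m"
    using step.IH by (intro mult_left_mono) auto
  finally show ?case
    by (simp add: algebra_simps)
qed simp

lemma sqrt_pi_exp_one_bound:
  assumes "2 \<le> n"
  shows "16 < sqrt pi * exp 1 * (2 * real n - 1) * sqrt (real n)"
proof -
  have "1.7 \<le> sqrt pi"
    using pi_gt3 by (intro real_le_rsqrt) (simp add: power2_eq_square)
  moreover have "2.7 \<le> exp (1::real)"
    using e_approx_32[unfolded abs_le_iff] by (simp add: inverse_eq_divide)
  moreover have "3 \<le> 2 * real n - 1"
    using assms by simp
  moreover have "1.4 \<le> sqrt (real n)"
    using assms by (intro real_le_rsqrt) (simp add: power2_eq_square)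
  ultimately have "1.7 * 2.7 * 3 * 1.4 \<le> sqrt pi * exp 1 * (2 * real n - 1) * sqrt (real n)"
    by (intro mult_mono) auto
  then show ?thesis
    by simp
qed

lemma gauss_jacobi_constant_lt:
  fixes \<alpha> :: real and n :: nat
  assumes "0 \<le> \<alpha>" and "2 \<le> n"
  shows "64 / (16 ^ n * fact (2 * n) * (\<alpha> + 2))
         < 4 * sqrt pi / exp 2 * ((2 * real n - 1) * real n powr (3 / 2) / (2 * real n + \<alpha>))
           * (exp 1 * real n / (2 * (2 * real n - 1)\<^sup>2)) ^ (2 * n)"
proof -
  define u e m where "u = real n" and "e = exp (1::real)" and "m = 2 * u - 1"
  define G U Mq E where "G = (2::real) ^ (2 * n)" and "U = u ^ (2 * n)" and "Mq = m ^ (2 * n)"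
    and "E = e ^ (2 * n)"
  define A D where "A = \<alpha> + 2" and "D = 2 * u + \<alpha>"
  have u: "2 \<le> u"
    using assms by (simp add: u_def)
  have pos: "0 < e" "0 < u" "0 < m" "0 < A" "0 < D" "0 < G" "0 < U" "0 < Mq" "0 < E"
    using u assms by (simp_all add: e_def m_def A_def D_def G_def U_def Mq_def E_def)
  have "e * Mq \<le> G * U"
    using exp_one_mult_power_le_Suc_power[of "2 * n - 1"] assms(2)
    by (simp add: e_def m_def u_def G_def U_def Mq_def of_nat_diff power_mult_distrib)
  then have Mq_le: "e\<^sup>2 * Mq\<^sup>2 \<le> (G * U)\<^sup>2"
    using pos by (metis power_mono power_mult_distrib mult_pos_pos less_imp_le)
  have "\<alpha> \<le> \<alpha> * u"
    using u assms(1) mult_left_mono[of 1 u \<alpha>] by simp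
  then have D_le: "D \<le> A * u"
    by (simp add: A_def D_def algebra_simps)
  have "16 * (e * D * Mq\<^sup>2) < (sqrt pi * e * m * sqrt u) * (e * D * Mq\<^sup>2)"
    using sqrt_pi_exp_one_bound[OF assms(2)] pos
    by (intro mult_strict_right_mono) (auto simp: e_def m_def u_def)
  also have "\<dots> = sqrt pi * m * sqrt u * D * (e\<^sup>2 * Mq\<^sup>2)"
    by (simp add: power2_eq_square)
  also have "\<dots> \<le> sqrt pi * m * sqrt u * (A * u) * (G * U)\<^sup>2"
    using Mq_le pos D_le by (intro mult_mono mult_left_mono) auto
  finally have key: "16 * e * D * Mq\<^sup>2 < sqrt pi * A * m * (u * sqrt u) * (G * U)\<^sup>2"
    by (simp add: ac_simps)
  have "e * (G * U / E) \<le> fact (2 * n)"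
    using fact_ge_exp_one_mult_power[of "2 * n"] assms
    by (simp add: e_def G_def U_def E_def u_def power_divide power_mult_distrib)
  then have "64 / (G\<^sup>2 * fact (2 * n) * A) \<le> 64 / (G\<^sup>2 * (e * (G * U / E)) * A)"
    using pos by (intro divide_left_mono mult_mono mult_right_mono) auto
  also have "\<dots> < 4 * sqrt pi / e\<^sup>2 * (m * (u * sqrt u) / D) * (E * U / (G * Mq\<^sup>2))"
    using pos key by (simp add: field_simps power2_eq_square)
  also have "\<dots> = 4 * sqrt pi / exp 2 * ((2 * real n - 1) * real n powr (3 / 2) / (2 * real n + \<alpha>))
           * (exp 1 * real n / (2 * (2 * real n - 1)\<^sup>2)) ^ (2 * n)"
  proof -
    have "exp 2 = e\<^sup>2"
      by (simp add: e_def power2_eq_square exp_add[symmetric])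
    moreover have "real n powr (3 / 2) = u * sqrt u"
      using powr_add[of u 1 "1/2"] by (simp add: u_def powr_half_sqrt)
    moreover have "(exp 1 * real n / (2 * (2 * real n - 1)\<^sup>2)) ^ (2 * n) = E * U / (G * Mq\<^sup>2)"
      by (simp add: e_def u_def m_def E_def U_def G_def Mq_def power_divide power_mult_distrib
          power_mult[symmetric] mult.commute)
    ultimately show ?thesis
      by (simp add: u_def m_def D_def)
  qed
  moreover have "G\<^sup>2 = 16 ^ n"
  proof -
    have "G\<^sup>2 = 2 ^ (4 * n)"
      by (simp add: G_def power_mult[symmetric] mult.commute)
    also have "\<dots> = 16 ^ n"
      by (simp add: power_mult)
    finally show ?thesis .
  qed
  ultimately show ?thesis
    by (simp add: A_def)
qed

lemma chebyshev_error_bound_lt: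
  fixes a T \<alpha> :: real and n :: nat
  assumes "0 < a" and "0 < T" and "0 \<le> \<alpha>" and "2 \<le> n"
  shows "T ^ (2 * n) / fact (2 * n) * (4 * (a/4) ^ (2 * (n - 1)) * (a powr (\<alpha> + 2) / (\<alpha> + 2)))
         < 4 * sqrt pi * a powr \<alpha> / exp 2
           * ((2 * real n - 1) * real n powr (3 / 2) / (2 * real n + \<alpha>))
           * (a * exp 1 * real n * T / (2 * (2 * real n - 1)^2)) ^ (2 * n)"
proof -
  obtain k where k: "n = Suc k"
    using assms(4) by (cases n) auto
  define A where "A = \<alpha> + 2"
  have "0 < A"
    using assms(3) by (simp add: A_def)
  have powr_eq: "a powr (\<alpha> + 2) = a powr \<alpha> * a\<^sup>2"
    using assms(1) by (simp add: powr_add)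
  have power_eq: "(a/4) ^ (2 * (n - 1)) = (a\<^sup>2) ^ k / 16 ^ k"
    by (simp add: k power_mult power_divide)
  have aT_eq: "(a * T) ^ (2 * n) = (a\<^sup>2) ^ k * a\<^sup>2 * T ^ (2 * n)"
  proof -
    have "2 * n = 2 * k + 2"
      by (simp add: k)
    then have "a ^ (2 * n) = (a\<^sup>2) ^ k * a\<^sup>2"
      by (simp only: power_add power_mult)
    then show ?thesis
      by (simp add: power_mult_distrib)
  qed
  have sixteen_eq: "(16::real) ^ n = 16 * 16 ^ k"
    by (simp add: k)
  have "T ^ (2 * n) / fact (2 * n) * (4 * (a/4) ^ (2 * (n - 1)) * (a powr (\<alpha> + 2) / (\<alpha> + 2)))
      = a powr \<alpha> * (a * T) ^ (2 * n) * (64 / (16 ^ n * fact (2 * n) * (\<alpha> + 2)))"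
    unfolding powr_eq power_eq aT_eq sixteen_eq unfolding A_def[symmetric]
    using \<open>0 < A\<close> by (simp add: field_simps)
  also have "\<dots> < a powr \<alpha> * (a * T) ^ (2 * n) * (4 * sqrt pi / exp 2
      * ((2 * real n - 1) * real n powr (3 / 2) / (2 * real n + \<alpha>))
      * (exp 1 * real n / (2 * (2 * real n - 1)\<^sup>2)) ^ (2 * n))"
    using gauss_jacobi_constant_lt[OF assms(3,4)] assms(1,2) by (intro mult_strict_left_mono) auto
  also have "\<dots> = 4 * sqrt pi * a powr \<alpha> / exp 2
           * ((2 * real n - 1) * real n powr (3 / 2) / (2 * real n + \<alpha>))
           * (a * exp 1 * real n * T / (2 * (2 * real n - 1)^2)) ^ (2 * n)"
  proof -
    have "a * exp 1 * real n * T / (2 * (2 * real n - 1)\<^sup>2)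
        = (a * T) * (exp 1 * real n / (2 * (2 * real n - 1)\<^sup>2))"
      by (simp add: field_simps)
    then have "(a * exp 1 * real n * T / (2 * (2 * real n - 1)\<^sup>2)) ^ (2 * n)
        = (a * T) ^ (2 * n) * (exp 1 * real n / (2 * (2 * real n - 1)\<^sup>2)) ^ (2 * n)"
      by (simp only: power_mult_distrib)
    then show ?thesis
      by simp
  qed
  finally show ?thesis .
qed

theorem lemma7:
  fixes a T \<alpha> t :: real and n :: nat and s w :: "nat \<Rightarrow> real"
  assumes "a > 0" and "T > 0" and "0 < \<alpha>" and "\<alpha> < 1" and "n > 1"
    and "gauss_jacobi_rule a \<alpha> n s w"
    and "0 < t" and "t < T"
  shows "\<bar>integral {0..a} (\<lambda>x. exp (- t * x) * x powr (\<alpha> - 1))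
           - (\<Sum>k = 1..n. w k * exp (- s k * t))\<bar>
         < 4 * sqrt pi * a powr \<alpha> / exp 2
           * ((2 * real n - 1) * real n powr (3 / 2) / (2 * real n + \<alpha>))
           * (a * exp 1 * real n * T / (2 * (2 * real n - 1)^2)) ^ (2 * n)"
proof -
  interpret gauss_jacobi a \<alpha> n s w
    using assms by unfold_locales auto
  have "0 < weighted_integral (poly (node_poly\<^sup>2))"
    using node_poly_nonzero by (intro weighted_integral_poly_pos) auto
  have "\<bar>integral {0..a} (\<lambda>x. exp (- t * x) * x powr (\<alpha> - 1)) - (\<Sum>k = 1..n. w k * exp (- s k * t))\<bar>
      = \<bar>quadrature_error (\<lambda>x. exp (- t * x))\<bar>"
    by (simp add: quadrature_error_def weighted_integral_def quadrature_def mult.commute)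
  also have "\<dots> \<le> t ^ (2 * n) / fact (2 * n) * weighted_integral (poly (node_poly\<^sup>2))"
    using assms(7) by (intro abs_quadrature_error_exp_le) simp
  also have "\<dots> \<le> T ^ (2 * n) / fact (2 * n) * weighted_integral (poly (node_poly\<^sup>2))"
    using assms(7,8) \<open>0 < weighted_integral _\<close>
    by (intro mult_right_mono divide_right_mono power_mono) auto
  also have "\<dots> \<le> T ^ (2 * n) / fact (2 * n) * (4 * (a/4) ^ (2 * (n - 1)) * (a powr (\<alpha> + 2) / (\<alpha> + 2)))"
    using assms(2,5) by (intro mult_left_mono weighted_integral_node_poly_square_le) auto
  also have "\<dots> < 4 * sqrt pi * a powr \<alpha> / exp 2
           * ((2 * real n - 1) * real n powr (3 / 2) / (2 * real n + \<alpha>))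
           * (a * exp 1 * real n * T / (2 * (2 * real n - 1)^2)) ^ (2 * n)"
    using assms by (intro chebyshev_error_bound_lt) auto
  finally show ?thesis .
qed

end
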